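(* For any $m$ and $n$ with $M^2k\le m\le n$ and $0.3\log n\le k$, the probability that $G_{m,k}$ contains an edge of length at least $\frac18M\sqrt k$ is $o(e^{-9k})$ as $k\to\infty$ (uniformly in such $m,n$).
   Context: For $m>0$ let $S_m$ be a square of area $m$, $\mathcal P$ a Poisson process of intensity one in $S_m$, and $G_{m,k}$ the undirected graph on $\mathcal P$ in which $x,y$ are adjacent if $y$ is one of the $k$ nearest neighbours of $x$ or vice versa. $M$ is a fixed real constant with $M\ge 40$ such that, whenever $0.30\log n<k<0.52\log n$, the probability that $G_{n,k}$ contains two components each of Euclidean diameter greater than $\frac18 M\sqrt{k}$ is $o(e^{-9k})$ as $k\to\infty$. *)

theory Defs
  imports "HOL-Probability.Probability"
begin

type_synonym point = "real \<times> real"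

definition square :: "real \<Rightarrow> point set" where
  "square m = cbox (0, 0) (sqrt m, sqrt m)"

text \<open>Probability that a Poisson process of intensity one in S_m has property E.
  The process is realised in the standard way: the number N of points is Poisson(m)
  distributed, and given N the points are N independent uniform points in S_m.
  A configuration is the (finite) set of its points.\<close>
definition poisson_prob :: "real \<Rightarrow> (point set \<Rightarrow> bool) \<Rightarrow> real" where
  "poisson_prob m E =
     (\<Sum>N. (m ^ N / fact N * exp (- m)) *
        measure (PiM {..<N} (\<lambda>_. uniform_measure lborel (square m)))
          {\<omega> \<in> space (PiM {..<N} (\<lambda>_. uniform_measure lborel (square m))). E (\<omega> ` {..<N})})"

definition knn :: "nat \<Rightarrow> point set \<Rightarrow> point \<Rightarrow> point \<Rightarrow> bool" where
  "knn k P x y \<longleftrightarrow> x \<in> P \<and> y \<in> P \<and> y \<noteq> x \<and>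
     card {z \<in> P. z \<noteq> x \<and> dist x z < dist x y} < k"

definition knn_adj :: "nat \<Rightarrow> point set \<Rightarrow> point \<Rightarrow> point \<Rightarrow> bool" where
  "knn_adj k P x y \<longleftrightarrow> knn k P x y \<or> knn k P y x"

definition knn_component :: "nat \<Rightarrow> point set \<Rightarrow> point \<Rightarrow> point set" where
  "knn_component k P x = {y \<in> P. (x, y) \<in> {(a, b). knn_adj k P a b}\<^sup>*}"

definition two_big_components :: "nat \<Rightarrow> real \<Rightarrow> point set \<Rightarrow> bool" where
  "two_big_components k d P \<longleftrightarrow>
     (\<exists>x\<in>P. \<exists>y\<in>P. knn_component k P x \<noteq> knn_component k P y \<and>
        diameter (knn_component k P x) > d \<and> diameter (knn_component k P y) > d)"

definition long_edge :: "nat \<Rightarrow> real \<Rightarrow> point set \<Rightarrow> bool" where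
  "long_edge k d P \<longleftrightarrow> (\<exists>x y. knn_adj k P x y \<and> dist x y \<ge> d)"

end

theory Submission
  imports Defs
begin

text \<open>An edge of length at least r leaving x in the k-nearest-neighbour graph forces x to have
  fewer than k other points within distance r. For N independent uniform points in a square of
  area m we bound the probability of such a sparse point by an exponential moment: weighting each
  close neighbour by c \<le> 1 gives the bound N c^(-k) (1 - (1 - c) p)^(N - 1), where p is a lower
  bound for the probability of hitting the r-ball around a point of the square. Since the quarter
  of that ball facing the centre of the square lies inside it, p \<ge> 0.6628 r^2 / m. Averaging over
  the Poisson number N of points gives m c^(-k) exp (- (1 - c) 0.6628 r^2), and with c = 1/16,
  r = M sqrt k / 8 and m \<le> n \<le> exp (10 k / 3) this is at most (16 exp (-3.2))^k exp (-9 k).\<close>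

section \<open>A disc meets a square in a definite fraction of its area\<close>

definition inward_interval :: "real \<Rightarrow> real \<Rightarrow> real \<Rightarrow> real \<Rightarrow> real set" where
  "inward_interval s u \<alpha> \<beta> = (if u \<le> s/2 then {u + \<alpha><..<u + \<beta>} else {u - \<beta><..<u - \<alpha>})"

lemma inward_interval_eq:
  obtains l where "inward_interval s u \<alpha> \<beta> = {l<..<l + (\<beta> - \<alpha>)}"
proof (cases "u \<le> s/2")
  case True
  then show ?thesis using that[of "u + \<alpha>"] by (simp add: inward_interval_def)
next
  case False
  then show ?thesis using that[of "u - \<beta>"] by (simp add: inward_interval_def)
qed

lemma inward_interval_subset:
  "\<lbrakk>0 \<le> u; u \<le> s; 0 \<le> \<alpha>; \<beta> \<le> s/2\<rbrakk> \<Longrightarrow> inward_interval s u \<alpha> \<beta> \<subseteq> {0..s}"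
  by (auto simp: inward_interval_def)

lemma abs_diff_less_if_mem_inward_interval:
  "\<lbrakk>0 \<le> \<alpha>; v \<in> inward_interval s u \<alpha> \<beta>\<rbrakk> \<Longrightarrow> \<bar>v - u\<bar> < \<beta>"
  by (auto simp: inward_interval_def split: if_splits)

lemma inward_interval_disjoint:
  "\<beta> \<le> \<alpha>' \<Longrightarrow> inward_interval s u \<alpha> \<beta> \<inter> inward_interval s u \<alpha>' \<beta>' = {}"
  by (auto simp: inward_interval_def)

lemma greaterThanLessThan_Times_eq_box:
  "{a<..<b::real} \<times> {c<..<d::real} = box (a, c) (b, d)"
  by (auto simp: box_def Basis_prod_def)

lemma inward_box_fmeasurable:
  "inward_interval s a \<alpha> \<beta> \<times> inward_interval s b \<gamma> \<delta> \<in> fmeasurable lborel"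
  by (simp add: inward_interval_def greaterThanLessThan_Times_eq_box)

lemma measure_inward_box:
  assumes "\<alpha> \<le> \<beta>" "\<gamma> \<le> \<delta>"
  shows "measure lborel (inward_interval s a \<alpha> \<beta> \<times> inward_interval s b \<gamma> \<delta>) = (\<beta> - \<alpha>) * (\<delta> - \<gamma>)"
proof -
  obtain l where l: "inward_interval s a \<alpha> \<beta> = {l<..<l + (\<beta> - \<alpha>)}" by (rule inward_interval_eq)
  obtain l' where l': "inward_interval s b \<gamma> \<delta> = {l'<..<l' + (\<delta> - \<gamma>)}" by (rule inward_interval_eq)
  show ?thesis
    using assms unfolding l l' greaterThanLessThan_Times_eq_box
    by (subst measure_lborel_box) (auto simp: Basis_prod_def)
qed

lemma inward_box_subset_ball_Int_square:
  assumes p: "(a, b) \<in> cbox (0, 0) (s, s)" and "0 \<le> \<gamma>" "x \<le> s/2" "\<delta> \<le> s/2"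
    and "0 \<le> r" "x\<^sup>2 + \<delta>\<^sup>2 \<le> r\<^sup>2"
  shows "inward_interval s a 0 x \<times> inward_interval s b \<gamma> \<delta> \<subseteq> ball (a, b) r \<inter> cbox (0, 0) (s, s)"
proof
  fix v assume "v \<in> inward_interval s a 0 x \<times> inward_interval s b \<gamma> \<delta>"
  then obtain v1 v2 where v: "v = (v1, v2)"
    and v1: "v1 \<in> inward_interval s a 0 x" and v2: "v2 \<in> inward_interval s b \<gamma> \<delta>"
    by blast
  have "\<bar>v1 - a\<bar> < x" "\<bar>v2 - b\<bar> < \<delta>"
    using v1 v2 \<open>0 \<le> \<gamma>\<close> by (auto intro: abs_diff_less_if_mem_inward_interval)
  then have "(v1 - a)\<^sup>2 < x\<^sup>2" "(v2 - b)\<^sup>2 < \<delta>\<^sup>2"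
    using power_strict_mono[of "\<bar>v1 - a\<bar>" x 2] power_strict_mono[of "\<bar>v2 - b\<bar>" \<delta> 2] by simp_all
  then have "sqrt ((v1 - a)\<^sup>2 + (v2 - b)\<^sup>2) < sqrt (r\<^sup>2)"
    using \<open>x\<^sup>2 + \<delta>\<^sup>2 \<le> r\<^sup>2\<close> by (intro real_sqrt_less_mono) simp
  then have "v \<in> ball (a, b) r"
    using \<open>0 \<le> r\<close> by (simp add: v dist_Pair_Pair dist_real_def power2_commute)
  moreover have "v \<in> cbox (0, 0) (s, s)"
    using p v1 v2 inward_interval_subset[of a s 0 x] inward_interval_subset[of b s \<gamma> \<delta>] assms(2-4)
    by (auto simp: v cbox_Pair_iff)
  ultimately show "v \<in> ball (a, b) r \<inter> cbox (0, 0) (s, s)" by blast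
qed

lemma measure_ball_Int_square_ge:
  assumes "0 < r" "2 * r \<le> s" and p: "p \<in> cbox (0, 0) (s, s)"
  shows "0.6628 * r\<^sup>2 \<le> measure lborel (ball p r \<inter> cbox (0, 0) (s, s))"
proof -
  obtain a b where ab: "p = (a, b)" by fastforce
  define B where "B x \<gamma> \<delta> = inward_interval s a 0 (x * r) \<times> inward_interval s b (\<gamma> * r) (\<delta> * r)"
    for x \<gamma> \<delta> :: real
  have fm: "B x \<gamma> \<delta> \<in> fmeasurable lborel" for x \<gamma> \<delta>
    unfolding B_def by (rule inward_box_fmeasurable)
  have measure_B: "measure lborel (B x \<gamma> \<delta>) = x * (\<delta> - \<gamma>) * r\<^sup>2" if "0 \<le> x" "\<gamma> \<le> \<delta>" for x \<gamma> \<delta>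
    using measure_inward_box[of 0 "x * r" "\<gamma> * r" "\<delta> * r" s a b] that \<open>0 < r\<close>
    by (simp add: B_def power2_eq_square algebra_simps)
  have B_subset: "B x \<gamma> \<delta> \<subseteq> ball p r \<inter> cbox (0, 0) (s, s)"
    if "0 \<le> \<gamma>" "x \<le> 1" "\<delta> \<le> 1" "x\<^sup>2 + \<delta>\<^sup>2 \<le> 1" for \<gamma> x \<delta>
  proof -
    have "x * r \<le> s / 2" "\<delta> * r \<le> s / 2"
      using that assms mult_right_mono[of x 1 r] mult_right_mono[of \<delta> 1 r] by linarith+
    moreover have "(x * r)\<^sup>2 + (\<delta> * r)\<^sup>2 \<le> r\<^sup>2"
      using mult_right_mono[OF that(4), of "r\<^sup>2"] by (simp add: power_mult_distrib algebra_simps)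
    ultimately show ?thesis
      using inward_box_subset_ball_Int_square[of a b s "\<gamma> * r" "x * r" "\<delta> * r" r] that assms
      by (simp add: B_def ab)
  qed
  have B_disjoint: "B x \<gamma> \<delta> \<inter> B x' \<gamma>' \<delta>' = {}" if "\<delta> \<le> \<gamma>'" for \<delta> \<gamma>' x \<gamma> x' \<delta>'
    using inward_interval_disjoint[of "\<delta> * r" "\<gamma>' * r" s b "\<gamma> * r" "\<delta>' * r"] that \<open>0 < r\<close>
    by (auto simp: B_def)
  txt \<open>A staircase of three boxes of widths 0.9, 0.71, 0.43 and heights 0.42, 0.28, 0.2 (in units
    of r) inside the quarter disc facing the centre of the square; 0.6628 is its area.\<close>
  let ?B1 = "B 0.9 0 0.42" and ?B2 = "B 0.71 0.42 0.7" and ?B3 = "B 0.43 0.7 0.9"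
  have "0.6628 * r\<^sup>2 = measure lborel ?B1 + measure lborel ?B2 + measure lborel ?B3"
    by (simp add: measure_B algebra_simps)
  also have "\<dots> = measure lborel (?B1 \<union> ?B2 \<union> ?B3)"
    using measure_Un3[of ?B1 lborel ?B2] measure_Un3[of "?B1 \<union> ?B2" lborel ?B3]
      B_disjoint[of "0.42" "0.42"] B_disjoint[of "0.42" "0.7"] B_disjoint[of "0.7" "0.7"]
    by (simp add: fm fmeasurable.Un Int_Un_distrib2)
  also have "\<dots> \<le> measure lborel (ball p r \<inter> cbox (0, 0) (s, s))"
    using B_subset[of 0 "0.9" "0.42"] B_subset[of "0.42" "0.71" "0.7"] B_subset[of "0.7" "0.43" "0.9"]
      fmeasurable_Int_fmeasurable[of "cbox (0, 0) (s, s)" lborel "ball p r"]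
      fmeasurableD[OF fmeasurable.Un[OF fmeasurable.Un[OF fm fm] fm]]
    by (intro measure_mono_fmeasurable) (auto simp: power2_eq_square Int_commute)
  finally show ?thesis .
qed

section \<open>Independent points with few close neighbours\<close>

lemma damping_factor_nonneg:
  fixes c p :: real
  assumes "0 \<le> c" "c \<le> 1" "p \<le> 1"
  shows "0 \<le> 1 - (1 - c) * p"
  using mult_le_one[of "1 - c" p] mult_nonneg_nonpos[of "1 - c" p] assms by (cases "0 \<le> p") auto

lemma nn_integral_damped_ball:
  fixes U :: "'a::metric_space measure"
  assumes U: "prob_space U" and sets_U: "sets U = sets borel" and "0 \<le> c"
  shows "(\<integral>\<^sup>+z. ennreal (if dist y z < r then c else 1) \<partial>U)
    = ennreal (1 - (1 - c) * measure U (ball y r))"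
proof -
  interpret prob_space U by (rule U)
  have space_U: "space U = UNIV" using sets_eq_imp_space_eq[OF sets_U] by simp
  have integrable: "integrable U (\<lambda>z. (1 - c) * indicator (ball y r) z :: real)"
    by (intro integrable_mult_right integrable_real_indicator) (simp_all add: sets_U less_top[symmetric])
  have "(\<integral>\<^sup>+z. ennreal (if dist y z < r then c else 1) \<partial>U)
      = (\<integral>\<^sup>+z. ennreal (1 - (1 - c) * indicator (ball y r) z) \<partial>U)"
    by (rule nn_integral_cong) (simp add: indicator_def)
  also have "\<dots> = ennreal (\<integral>z. 1 - (1 - c) * indicator (ball y r) z \<partial>U)"
    using \<open>0 \<le> c\<close> integrable by (intro nn_integral_eq_integral) (auto simp: indicator_def)
  also have "(\<integral>z. 1 - (1 - c) * indicator (ball y r) z \<partial>U) = 1 - (1 - c) * measure U (ball y r)"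
    using integrable prob_space by (simp add: Bochner_Integration.integral_diff space_U sets_U)
  finally show ?thesis .
qed

lemma nn_integral_prod_damped_le:
  fixes U :: "'a::{metric_space, second_countable_topology} measure"
  assumes U: "prob_space U" and sets_U[measurable_cong]: "sets U = sets borel"
    and J: "finite J" "i \<notin> J" and c: "0 \<le> c" "c \<le> 1"
    and p: "AE y in U. p \<le> measure U (ball y r)" "p \<le> 1"
  shows "(\<integral>\<^sup>+\<omega>. ennreal (\<Prod>j\<in>J. if dist (\<omega> i) (\<omega> j) < r then c else 1) \<partial>PiM (insert i J) (\<lambda>_. U))
    \<le> ennreal ((1 - (1 - c) * p) ^ card J)"
proof -
  interpret product_prob_space "\<lambda>_. U" by (rule product_prob_spaceI) (rule U)
  let ?g = "\<lambda>y z. ennreal (if dist y z < r then c else 1)"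
  have "(\<integral>\<^sup>+\<omega>. ennreal (\<Prod>j\<in>J. if dist (\<omega> i) (\<omega> j) < r then c else 1) \<partial>PiM (insert i J) (\<lambda>_. U))
      = (\<integral>\<^sup>+y. (\<integral>\<^sup>+x. ennreal (\<Prod>j\<in>J. if dist ((x(i := y)) i) ((x(i := y)) j) < r then c else 1)
          \<partial>PiM J (\<lambda>_. U)) \<partial>U)"
    by (rule product_nn_integral_insert_rev) (use J in measurable)
  also have "\<dots> = (\<integral>\<^sup>+y. (\<integral>\<^sup>+x. (\<Prod>j\<in>J. ?g y (x j)) \<partial>PiM J (\<lambda>_. U)) \<partial>U)"
    using J c by (intro nn_integral_cong) (auto simp: prod_ennreal intro!: arg_cong[where f = ennreal] prod.cong)
  also have "\<dots> = (\<integral>\<^sup>+y. (\<Prod>j\<in>J. \<integral>\<^sup>+z. ?g y z \<partial>U) \<partial>U)"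
    using J by (intro nn_integral_cong product_nn_integral_prod) auto
  also have "\<dots> \<le> (\<integral>\<^sup>+y. ennreal (1 - (1 - c) * p) ^ card J \<partial>U)"
  proof (rule nn_integral_mono_AE)
    show "AE y in U. (\<Prod>j\<in>J. \<integral>\<^sup>+z. ?g y z \<partial>U) \<le> ennreal (1 - (1 - c) * p) ^ card J"
      using p(1)
    proof eventually_elim
      case (elim y)
      then have "(\<integral>\<^sup>+z. ?g y z \<partial>U) \<le> ennreal (1 - (1 - c) * p)"
        using c by (auto simp: nn_integral_damped_ball[OF U sets_U] intro!: ennreal_leI mult_left_mono)
      then show ?case
        using prod_mono_ennreal[of J "\<lambda>_. \<integral>\<^sup>+z. ?g y z \<partial>U" "\<lambda>_. ennreal (1 - (1 - c) * p)"] by simp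
    qed
  qed
  also have "\<dots> = ennreal ((1 - (1 - c) * p) ^ card J)"
    using damping_factor_nonneg[OF c p(2)] prob_space.emeasure_space_1[OF U] by (simp add: ennreal_power)
  finally show ?thesis .
qed

lemma AE_PiM_component_neq:
  fixes U :: "'a::{metric_space, second_countable_topology} measure"
  assumes U: "prob_space U" and sets_U[measurable_cong]: "sets U = sets borel"
    and no_atoms: "\<And>y. emeasure U {y} = 0"
    and I: "finite I" "i \<in> I" "j \<in> I" "i \<noteq> j"
  shows "AE \<omega> in PiM I (\<lambda>_. U). \<omega> i \<noteq> \<omega> j"
proof -
  interpret product_prob_space "\<lambda>_. U" by (rule product_prob_spaceI) (rule U)
  define J where "J = I - {i}"
  have J: "I = insert i J" "finite J" "i \<notin> J" "j \<in> J" using I by (auto simp: J_def)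
  define A where "A = {\<omega> \<in> space (PiM I (\<lambda>_. U)). dist (\<omega> i) (\<omega> j) \<le> 0}"
  have A_sets[measurable]: "A \<in> sets (PiM I (\<lambda>_. U))" unfolding A_def using I by measurable
  have "emeasure (PiM I (\<lambda>_. U)) A = (\<integral>\<^sup>+\<omega>. indicator A \<omega> \<partial>PiM I (\<lambda>_. U))"
    by simp
  also have "\<dots> = (\<integral>\<^sup>+y. (\<integral>\<^sup>+x. indicator A (x(i := y)) \<partial>PiM J (\<lambda>_. U)) \<partial>U)"
    unfolding J(1) by (rule product_nn_integral_insert_rev) (use J A_sets[unfolded J(1)] in auto)
  also have "\<dots> = (\<integral>\<^sup>+y. (\<integral>\<^sup>+x. indicator {y} (x j) \<partial>PiM J (\<lambda>_. U)) \<partial>U)"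
  proof (intro nn_integral_cong)
    fix y x assume "x \<in> space (PiM J (\<lambda>_. U))"
    then have "x(i := y) \<in> space (PiM I (\<lambda>_. U))"
      using J by (auto simp: space_PiM PiE_def extensional_def sets_eq_imp_space_eq[OF sets_U])
    then show "indicator A (x(i := y)) = (indicator {y} (x j) :: ennreal)"
      using J by (auto simp: A_def indicator_def)
  qed
  also have "\<dots> = (\<integral>\<^sup>+y. emeasure U {y} \<partial>U)"
  proof (intro nn_integral_cong)
    fix y
    have "(\<integral>\<^sup>+x. indicator {y} (x j) \<partial>PiM J (\<lambda>_. U))
        = (\<integral>\<^sup>+z. indicator {y} z \<partial>distr (PiM J (\<lambda>_. U)) U (\<lambda>\<omega>. \<omega> j))"
      by (rule nn_integral_distr[symmetric]) (use J in auto)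
    then show "(\<integral>\<^sup>+x. indicator {y} (x j) \<partial>PiM J (\<lambda>_. U)) = emeasure U {y}"
      using distr_PiM_component[of J "\<lambda>_. U" j] U J by simp
  qed
  also have "\<dots> = 0"
    using no_atoms by simp
  finally have "A \<in> null_sets (PiM I (\<lambda>_. U))" using A_sets by auto
  then show ?thesis by (rule AE_I') (auto simp: A_def)
qed

lemma AE_PiM_inj_on:
  fixes U :: "'a::{metric_space, second_countable_topology} measure"
  assumes "prob_space U" "sets U = sets borel" "\<And>y. emeasure U {y} = 0" "finite I"
  shows "AE \<omega> in PiM I (\<lambda>_. U). inj_on \<omega> I"
proof -
  have "AE \<omega> in PiM I (\<lambda>_. U). \<forall>i\<in>I. \<forall>j\<in>I. i \<noteq> j \<longrightarrow> \<omega> i \<noteq> \<omega> j"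
    using assms AE_PiM_component_neq[OF assms(1-3)] by (intro AE_finite_allI) auto
  then show ?thesis by eventually_elim (auto simp: inj_on_def)
qed

lemma long_edge_imp_sparse_vertex:
  assumes "long_edge k r P" "finite P"
  obtains x where "x \<in> P" "card {z \<in> P - {x}. dist x z < r} < k"
proof -
  obtain x y where xy: "knn k P x y" "r \<le> dist x y"
    using assms(1) unfolding long_edge_def knn_adj_def by (metis dist_commute)
  then have "{z \<in> P - {x}. dist x z < r} \<subseteq> {z \<in> P. z \<noteq> x \<and> dist x z < dist x y}"
    by auto
  then have "card {z \<in> P - {x}. dist x z < r} \<le> card {z \<in> P. z \<noteq> x \<and> dist x z < dist x y}"
    using assms(2) by (intro card_mono) auto
  moreover have "x \<in> P" "card {z \<in> P. z \<noteq> x \<and> dist x z < dist x y} < k"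
    using xy(1) by (auto simp: knn_def)
  ultimately show ?thesis by (intro that[of x]) auto
qed

lemma long_edge_imp_prod_damped_ge:
  fixes c :: real
  assumes "finite I" "inj_on \<omega> I" "long_edge k r (\<omega> ` I)" "0 \<le> c" "c \<le> 1"
  shows "\<exists>i\<in>I. c ^ k \<le> (\<Prod>j\<in>I - {i}. if dist (\<omega> i) (\<omega> j) < r then c else 1)"
proof -
  obtain x where "x \<in> \<omega> ` I" and sparse: "card {z \<in> \<omega> ` I - {x}. dist x z < r} < k"
    using long_edge_imp_sparse_vertex[OF assms(3) finite_imageI[OF assms(1)]] by metis
  then obtain i where i: "i \<in> I" "x = \<omega> i" by blast
  define C where "C = {j \<in> I - {i}. dist (\<omega> i) (\<omega> j) < r}"
  have "\<omega> ` C = {z \<in> \<omega> ` I - {x}. dist x z < r}"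
    unfolding C_def i(2) using assms(2) i(1) by (auto simp: inj_on_eq_iff)
  moreover have "card (\<omega> ` C) = card C"
    by (rule card_image, rule inj_on_subset[OF assms(2)]) (auto simp: C_def)
  ultimately have "card C \<le> k" using sparse by simp
  then have "c ^ k \<le> c ^ card C"
    using assms(4,5) by (intro power_decreasing)
  also have "\<dots> = (\<Prod>j\<in>I - {i}. if dist (\<omega> i) (\<omega> j) < r then c else 1)"
    using assms(1) by (subst prod.If_cases) (auto simp: C_def Int_def)
  finally show ?thesis using i(1) by blast
qed

lemma long_edge_imp_le_sum_prod_damped:
  fixes c :: real
  assumes "finite I" "inj_on \<omega> I" "long_edge k r (\<omega> ` I)" "0 < c" "c \<le> 1"
  shows "1 \<le> ennreal ((1 / c) ^ k)
    * (\<Sum>i\<in>I. ennreal (\<Prod>j\<in>I - {i}. if dist (\<omega> i) (\<omega> j) < r then c else 1))"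
proof -
  obtain i where i: "i \<in> I"
    and damped: "c ^ k \<le> (\<Prod>j\<in>I - {i}. if dist (\<omega> i) (\<omega> j) < r then c else 1)"
    using long_edge_imp_prod_damped_ge[OF assms(1-3), of c] assms(4,5) by auto
  have "1 = (1 / c) ^ k * c ^ k"
    using assms(4) by (simp add: power_one_over)
  also have "\<dots> \<le> (1 / c) ^ k * (\<Prod>j\<in>I - {i}. if dist (\<omega> i) (\<omega> j) < r then c else 1)"
    using damped assms(4) by (intro mult_left_mono) auto
  finally have "ennreal 1 \<le> ennreal ((1 / c) ^ k * (\<Prod>j\<in>I - {i}. if dist (\<omega> i) (\<omega> j) < r then c else 1))"
    by (rule ennreal_leI)
  also have "\<dots> = ennreal ((1 / c) ^ k) * ennreal (\<Prod>j\<in>I - {i}. if dist (\<omega> i) (\<omega> j) < r then c else 1)"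
    using assms(4) by (intro ennreal_mult prod_nonneg) auto
  also have "\<dots> \<le> ennreal ((1 / c) ^ k)
      * (\<Sum>i\<in>I. ennreal (\<Prod>j\<in>I - {i}. if dist (\<omega> i) (\<omega> j) < r then c else 1))"
    using i assms(1) by (intro mult_left_mono member_le_sum) auto
  finally show ?thesis by simp
qed

lemma measure_PiM_long_edge_le:
  fixes U :: "point measure" and c :: real
  assumes U: "prob_space U" and sets_U[measurable_cong]: "sets U = sets borel"
    and no_atoms: "\<And>y. emeasure U {y} = 0"
    and p: "AE y in U. p \<le> measure U (ball y r)" "p \<le> 1" and c: "0 < c" "c \<le> 1"
  shows "measure (PiM {..<N} (\<lambda>_. U)) {\<omega> \<in> space (PiM {..<N} (\<lambda>_. U)). long_edge k r (\<omega> ` {..<N})}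
    \<le> real N * (1 / c) ^ k * (1 - (1 - c) * p) ^ (N - 1)"
proof -
  define P where "P = PiM {..<N} (\<lambda>_. U)"
  define E where "E = {\<omega> \<in> space P. long_edge k r (\<omega> ` {..<N})}"
  define D where "D i \<omega> = ennreal (\<Prod>j\<in>{..<N} - {i}. if dist (\<omega> i) (\<omega> j) < r then c else 1)"
    for i and \<omega> :: "nat \<Rightarrow> point"
  define a where "a = 1 - (1 - c) * p"
  have a_nonneg: "0 \<le> a"
    unfolding a_def using c p(2) by (intro damping_factor_nonneg) auto
  interpret P: prob_space P
    unfolding P_def by (rule prob_space_PiM) (rule U)
  have D_measurable[measurable]: "D i \<in> borel_measurable P" if "i \<in> {..<N}" for i
    unfolding D_def P_def using that by measurable
  have indicator_E_le: "AE \<omega> in P. indicator E \<omega> \<le> ennreal ((1 / c) ^ k) * (\<Sum>i<N. D i \<omega>)"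
    using AE_PiM_inj_on[OF U sets_U no_atoms finite_lessThan[of N], folded P_def]
  proof eventually_elim
    case (elim \<omega>)
    then show ?case
      using long_edge_imp_le_sum_prod_damped[OF finite_lessThan elim _ c, of k r]
      by (cases "\<omega> \<in> E") (auto simp: E_def D_def)
  qed
  have integral_D: "(\<integral>\<^sup>+\<omega>. D i \<omega> \<partial>P) \<le> ennreal (a ^ (N - 1))" if "i \<in> {..<N}" for i
  proof -
    have "insert i ({..<N} - {i}) = {..<N}" "card ({..<N} - {i}) = N - 1" using that by auto
    then show ?thesis
      using nn_integral_prod_damped_le[OF U sets_U _ _ _ c(2) p, of "{..<N} - {i}" i] c
      by (simp add: D_def P_def a_def)
  qed
  show ?thesis
  proof (cases "E \<in> sets P")
    case False
    txt \<open>The event need not be measurable; then its measure is 0 by convention.\<close>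
    have "0 \<le> real N * (1 / c) ^ k * a ^ (N - 1)" using a_nonneg c by simp
    then show ?thesis using False by (simp add: measure_notin_sets E_def P_def a_def)
  next
    case True
    then have "emeasure P E \<le> (\<integral>\<^sup>+\<omega>. ennreal ((1 / c) ^ k) * (\<Sum>i<N. D i \<omega>) \<partial>P)"
      using indicator_E_le by (simp add: nn_integral_mono_AE flip: nn_integral_indicator)
    also have "\<dots> = ennreal ((1 / c) ^ k) * (\<Sum>i<N. \<integral>\<^sup>+\<omega>. D i \<omega> \<partial>P)"
      by (simp add: nn_integral_cmult nn_integral_sum)
    also have "\<dots> \<le> ennreal ((1 / c) ^ k) * (\<Sum>i<N. ennreal (a ^ (N - 1)))"
      using integral_D by (intro mult_left_mono sum_mono) auto
    also have "\<dots> = ennreal (real N * (1 / c) ^ k * a ^ (N - 1))"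
      using a_nonneg c by (simp add: ennreal_mult[symmetric] ennreal_of_nat_eq_real_of_nat)
    finally have "measure P E \<le> real N * (1 / c) ^ k * a ^ (N - 1)"
      using a_nonneg c by (simp add: P.emeasure_eq_measure)
    then show ?thesis by (simp add: P_def E_def a_def)
  qed
qed

section \<open>Poissonisation\<close>

lemma poisson_weighted_sums:
  fixes m C a :: real
  shows "(\<lambda>N. m ^ N / fact N * exp (- m) * (real N * C * a ^ (N - 1)))
    sums (m * C * exp (- m * (1 - a)))"
proof -
  have shift: "m * C * exp (- m) * ((m * a) ^ n / fact n)
      = m ^ Suc n / fact (Suc n) * exp (- m) * (real (Suc n) * C * a ^ (Suc n - 1))" for n
  proof -
    have fact_Suc: "(fact (Suc n) :: real) = real (Suc n) * fact n" by simp
    show ?thesis by (simp only: fact_Suc) (simp add: field_simps power_mult_distrib del: of_nat_Suc)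
  qed
  have limit: "m * C * exp (- m) * exp (m * a) = m * C * exp (- m * (1 - a))"
    by (simp add: mult.assoc exp_add[symmetric] algebra_simps)
  have "(\<lambda>n. m * C * exp (- m) * ((m * a) ^ n / fact n)) sums (m * C * exp (- m) * exp (m * a))"
    using exp_converges[of "m * a"] by (intro sums_mult) (simp add: divide_inverse mult.commute)
  then have "(\<lambda>n. m ^ Suc n / fact (Suc n) * exp (- m) * (real (Suc n) * C * a ^ (Suc n - 1)))
      sums (m * C * exp (- m * (1 - a)))"
    unfolding shift limit .
  then show ?thesis
    using sums_Suc_iff[of "\<lambda>N. m ^ N / fact N * exp (- m) * (real N * C * a ^ (N - 1))"] by simp
qed

lemma poisson_mixture_le:
  fixes m C a :: real and f :: "nat \<Rightarrow> real"
  assumes "0 \<le> m" "\<And>N. 0 \<le> f N" "\<And>N. f N \<le> real N * C * a ^ (N - 1)"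
  shows "(\<Sum>N. m ^ N / fact N * exp (- m) * f N) \<le> m * C * exp (- m * (1 - a))"
proof -
  note bound_sums = poisson_weighted_sums[of m C a]
  have weight_nonneg: "0 \<le> m ^ N / fact N * exp (- m)" for N
    using assms(1) by simp
  have term_le: "m ^ N / fact N * exp (- m) * f N \<le> m ^ N / fact N * exp (- m) * (real N * C * a ^ (N - 1))"
    for N by (rule mult_left_mono[OF assms(3) weight_nonneg])
  have term_nonneg: "0 \<le> m ^ N / fact N * exp (- m) * f N" for N
    by (rule mult_nonneg_nonneg[OF weight_nonneg assms(2)])
  have "summable (\<lambda>N. m ^ N / fact N * exp (- m) * f N)"
    using term_nonneg term_le
    by (intro summable_comparison_test'[OF sums_summable[OF bound_sums], of 0]) (simp only: real_norm_def abs_of_nonneg)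
  then have "(\<Sum>N. m ^ N / fact N * exp (- m) * f N)
      \<le> (\<Sum>N. m ^ N / fact N * exp (- m) * (real N * C * a ^ (N - 1)))"
    by (rule suminf_le[OF term_le _ sums_summable[OF bound_sums]])
  also have "\<dots> = m * C * exp (- m * (1 - a))"
    using bound_sums by (simp add: sums_iff)
  finally show ?thesis .
qed

lemma emeasure_square: "0 \<le> m \<Longrightarrow> emeasure lborel (square m) = ennreal m"
  by (simp add: square_def emeasure_lborel_cbox_eq Basis_prod_def)

lemma prob_space_uniform_square: "0 < m \<Longrightarrow> prob_space (uniform_measure lborel (square m))"
  by (intro prob_space_uniform_measure) (simp_all add: emeasure_square)

lemma emeasure_uniform_square_singleton: "emeasure (uniform_measure lborel (square m)) {y} = 0"
proof -
  have "emeasure lborel (square m \<inter> {y}) = 0" by (cases "y \<in> square m") auto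
  then show ?thesis by (simp add: emeasure_uniform_measure square_def)
qed

lemma measure_uniform_square_ball_ge:
  assumes "0 < r" "2 * r \<le> sqrt m" "y \<in> square m"
  shows "0.6628 * r\<^sup>2 / m \<le> measure (uniform_measure lborel (square m)) (ball y r)"
proof -
  have "0 < sqrt m" using assms(1,2) by linarith
  then have "0 < m" by simp
  then have "measure (uniform_measure lborel (square m)) (ball y r)
      = measure lborel (ball y r \<inter> square m) / m"
    by (subst measure_uniform_measure) (simp_all add: emeasure_square measure_def Int_commute)
  moreover have "0.6628 * r\<^sup>2 \<le> measure lborel (ball y r \<inter> square m)"
    using measure_ball_Int_square_ge[OF assms(1,2)] assms(3) by (simp add: square_def)
  ultimately show ?thesis
    using \<open>0 < m\<close> by (simp only: divide_right_mono less_imp_le)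
qed

lemma poisson_prob_long_edge_le:
  fixes c :: real
  assumes r: "0 < r" "2 * r \<le> sqrt m" and c: "0 < c" "c \<le> 1"
  shows "poisson_prob m (long_edge k r) \<le> m * (1 / c) ^ k * exp (- (1 - c) * 0.6628 * r\<^sup>2)"
proof -
  have "0 < sqrt m" using r by linarith
  then have "0 < m" by simp
  define U where "U = uniform_measure lborel (square m)"
  define p where "p = 0.6628 * r\<^sup>2 / m"
  have U: "prob_space U" and sets_U: "sets U = sets borel" and no_atoms: "\<And>y. emeasure U {y} = 0"
    using prob_space_uniform_square[OF \<open>0 < m\<close>] emeasure_uniform_square_singleton by (simp_all add: U_def)
  have p_ball: "AE y in U. p \<le> measure U (ball y r)"
    unfolding U_def p_def using measure_uniform_square_ball_ge[OF r]
    by (intro AE_uniform_measureI) (auto simp: square_def)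
  have "(0, 0) \<in> square m" using \<open>0 < m\<close> by (simp add: square_def cbox_Pair_iff)
  then have "p \<le> measure U (ball (0, 0) r)"
    using measure_uniform_square_ball_ge[OF r] by (simp add: U_def p_def)
  also have "\<dots> \<le> 1"
    by (rule prob_space.prob_le_1[OF U])
  finally have "p \<le> 1" .
  have "poisson_prob m (long_edge k r) \<le> m * (1 / c) ^ k * exp (- m * (1 - (1 - (1 - c) * p)))"
    unfolding poisson_prob_def U_def[symmetric]
    using measure_PiM_long_edge_le[OF U sets_U no_atoms p_ball \<open>p \<le> 1\<close> c] \<open>0 < m\<close>
    by (intro poisson_mixture_le) auto
  also have "- m * (1 - (1 - (1 - c) * p)) = - (1 - c) * 0.6628 * r\<^sup>2"
    using \<open>0 < m\<close> by (simp add: p_def field_simps)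
  finally show ?thesis .
qed

lemma poisson_prob_long_edge_le_geometric:
  fixes M m :: real
  assumes "40 \<le> M" "1 \<le> k" "M\<^sup>2 * real k \<le> m" "m \<le> exp (10/3 * real k)"
  shows "poisson_prob m (long_edge k (M * sqrt (real k) / 8))
    \<le> (16 * exp (- 3.2)) ^ k * exp (- 9 * real k)"
proof -
  define r where "r = M * sqrt (real k) / 8"
  have "1600 \<le> M\<^sup>2"
    using power_mono[OF assms(1), of 2] by simp
  have r2: "r\<^sup>2 = M\<^sup>2 * real k / 64"
    by (simp add: r_def power_mult_distrib power_divide)
  have "0 < r" using assms(1,2) by (simp add: r_def)
  moreover have "2 * r \<le> sqrt m"
  proof -
    have "(2 * r)\<^sup>2 = M\<^sup>2 * real k / 16" by (simp add: power_mult_distrib r2)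
    moreover have "0 \<le> M\<^sup>2 * real k" by simp
    ultimately have "(2 * r)\<^sup>2 \<le> m" using assms(3) by linarith
    then show ?thesis using \<open>0 < r\<close> real_le_rsqrt by simp
  qed
  ultimately have "poisson_prob m (long_edge k r) \<le> m * 16 ^ k * exp (- (15 / 16) * 0.6628 * r\<^sup>2)"
    using poisson_prob_long_edge_le[of r m "1 / 16" k] by simp
  also have "\<dots> \<le> exp (10/3 * real k) * 16 ^ k * exp (- (15.534375 * real k))"
  proof -
    have "25 * real k \<le> r\<^sup>2"
      using mult_right_mono[OF \<open>1600 \<le> M\<^sup>2\<close>, of "real k"] by (simp add: r2)
    then have "exp (- (15 / 16) * 0.6628 * r\<^sup>2) \<le> exp (- (15.534375 * real k))"
      by simp
    then show ?thesis
      using assms(4) by (intro mult_mono) auto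
  qed
  also have "\<dots> = 16 ^ k * (exp (10/3 * real k) * exp (- (15.534375 * real k)))"
    by (simp only: mult_ac)
  also have "\<dots> \<le> 16 ^ k * (exp (real k * - 3.2) * exp (- 9 * real k))"
    by (intro mult_left_mono) (simp_all flip: exp_add)
  also have "\<dots> = (16 * exp (- 3.2)) ^ k * exp (- 9 * real k)"
    by (simp only: power_mult_distrib exp_of_nat_mult mult_ac)
  finally show ?thesis by (simp add: r_def)
qed

lemma sixteen_times_exp_neg_3_2_less_1: "16 * exp (- 3.2) < (1 :: real)"
proof -
  have "(16 :: real) < 1.2 ^ 16" by (simp add: power_divide)
  also have "\<dots> \<le> exp 0.2 ^ 16"
    using exp_ge_add_one_self[of "0.2 :: real"] by (intro power_mono) auto
  also have "\<dots> = exp 3.2"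
    by (simp flip: exp_of_nat_mult)
  finally show ?thesis by (simp add: exp_minus field_simps)
qed

theorem corollary6:
  fixes M :: real
  assumes "M \<ge> 40"
    and "\<forall>\<epsilon>>0. \<exists>K. \<forall>k::nat. k \<ge> K \<longrightarrow> (\<forall>n::real.
           0.30 * ln n < real k \<and> real k < 0.52 * ln n \<longrightarrow>
           poisson_prob n (two_big_components k (M * sqrt (real k) / 8)) \<le> \<epsilon> * exp (- 9 * real k))"
  shows "\<forall>\<epsilon>>0. \<exists>K. \<forall>k::nat. k \<ge> K \<longrightarrow> (\<forall>m n::real.
           M\<^sup>2 * real k \<le> m \<and> m \<le> n \<and> 0.3 * ln n \<le> real k \<longrightarrow>
           poisson_prob m (long_edge k (M * sqrt (real k) / 8)) \<le> \<epsilon> * exp (- 9 * real k))"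
proof (intro allI impI)
  fix \<epsilon> :: real assume "0 < \<epsilon>"
  have "(\<lambda>k. (16 * exp (- 3.2 :: real)) ^ k) \<longlonglongrightarrow> 0"
    using sixteen_times_exp_neg_3_2_less_1 by (intro LIMSEQ_power_zero) simp
  from order_tendstoD(2)[OF this \<open>0 < \<epsilon>\<close>]
  obtain K where K: "\<And>k. K \<le> k \<Longrightarrow> (16 * exp (- 3.2)) ^ k < \<epsilon>"
    unfolding eventually_sequentially by blast
  show "\<exists>K. \<forall>k::nat. k \<ge> K \<longrightarrow> (\<forall>m n::real.
           M\<^sup>2 * real k \<le> m \<and> m \<le> n \<and> 0.3 * ln n \<le> real k \<longrightarrow>
           poisson_prob m (long_edge k (M * sqrt (real k) / 8)) \<le> \<epsilon> * exp (- 9 * real k))"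
  proof (intro exI[of _ "max K 1"] allI impI, elim conjE)
    fix k :: nat and m n :: real
    assume k: "max K 1 \<le> k" and m: "M\<^sup>2 * real k \<le> m" "m \<le> n" and n: "0.3 * ln n \<le> real k"
    have "0 < M\<^sup>2 * real k" using assms(1) k by simp
    then have "0 < m" using m(1) by linarith
    then have "ln m \<le> ln n"
      using m(2) by simp
    then have "ln m \<le> 10/3 * real k"
      using n by linarith
    then have "m \<le> exp (10/3 * real k)"
      using \<open>0 < m\<close> by (metis exp_le_cancel_iff exp_ln)
    then have "poisson_prob m (long_edge k (M * sqrt (real k) / 8)) \<le> (16 * exp (- 3.2)) ^ k * exp (- 9 * real k)"
      using poisson_prob_long_edge_le_geometric[OF assms(1)] k m(1) by simp
    also have "\<dots> \<le> \<epsilon> * exp (- 9 * real k)"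
      using K[of k] k by (intro mult_right_mono) auto
    finally show "poisson_prob m (long_edge k (M * sqrt (real k) / 8)) \<le> \<epsilon> * exp (- 9 * real k)" .
  qed
qed

end
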